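(* Let $(\mathcal A;\mathcal E)$ be an exact category with exact coproducts, and let $B\xrightarrow{m^i}C^i\to A^i$, $i\in I$ ($I$ a set), be conflations with common first term $B$. Then the pushout $m=\amalg_B m^i:B\to\amalg_B C^i$ of the family $(m^i)_{i\in I}$ exists, and it is the inflation of the conflation obtained by pushing out the coproduct conflation $B^{(I)}\xrightarrow{\amalg_i m^i}\amalg_i C^i\to\amalg_i A^i$ along the sum morphism $s:B^{(I)}\to B$; in particular its cokernel is $\amalg_i A^i$.
   Context: An exact category $(\mathcal A;\mathcal E)$ is an additive category with a class of kernel–cokernel pairs (conflations) satisfying the Quillen–Keller axioms. It has exact coproducts if set-indexed coproducts exist in $\mathcal A$ and the coproduct of any set of conflations is a conflation. $B^{(I)}$ denotes the coproduct of $I$ copies of $B$ and $s:B^{(I)}\to B$ is the morphism restricting to $1_B$ on each copy. *)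

theory Defs
  imports Main
begin

text \<open>A category with explicit sets of objects and morphisms, domain/codomain,
composition (comp g f = g after f), identities, and the data of a preadditive
structure (zero morphisms, addition, negation of parallel morphisms).\<close>

record ('o, 'm) addcat =
  Ob :: "'o set"
  Mor :: "'m set"
  dom :: "'m \<Rightarrow> 'o"
  cod :: "'m \<Rightarrow> 'o"
  comp :: "'m \<Rightarrow> 'm \<Rightarrow> 'm"
  ident :: "'o \<Rightarrow> 'm"
  zero :: "'o \<Rightarrow> 'o \<Rightarrow> 'm"
  plus :: "'m \<Rightarrow> 'm \<Rightarrow> 'm"
  neg :: "'m \<Rightarrow> 'm"

definition hom :: "('o, 'm, 'x) addcat_scheme \<Rightarrow> 'o \<Rightarrow> 'o \<Rightarrow> 'm set" where
  "hom C a b = {f \<in> Mor C. dom C f = a \<and> cod C f = b}"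

definition category :: "('o, 'm, 'x) addcat_scheme \<Rightarrow> bool" where
  "category C \<longleftrightarrow>
     (\<forall>f \<in> Mor C. dom C f \<in> Ob C \<and> cod C f \<in> Ob C) \<and>
     (\<forall>a \<in> Ob C. ident C a \<in> hom C a a) \<and>
     (\<forall>a \<in> Ob C. \<forall>b \<in> Ob C. \<forall>c \<in> Ob C. \<forall>f \<in> hom C a b. \<forall>g \<in> hom C b c.
        comp C g f \<in> hom C a c) \<and>
     (\<forall>a \<in> Ob C. \<forall>b \<in> Ob C. \<forall>c \<in> Ob C. \<forall>d \<in> Ob C.
        \<forall>f \<in> hom C a b. \<forall>g \<in> hom C b c. \<forall>h \<in> hom C c d.
        comp C h (comp C g f) = comp C (comp C h g) f) \<and>
     (\<forall>f \<in> Mor C. comp C f (ident C (dom C f)) = f \<and> comp C (ident C (cod C f)) f = f)"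

definition preadditive :: "('o, 'm, 'x) addcat_scheme \<Rightarrow> bool" where
  "preadditive C \<longleftrightarrow> category C \<and>
     (\<forall>a \<in> Ob C. \<forall>b \<in> Ob C.
        zero C a b \<in> hom C a b \<and>
        (\<forall>f \<in> hom C a b. \<forall>g \<in> hom C a b. plus C f g \<in> hom C a b) \<and>
        (\<forall>f \<in> hom C a b. neg C f \<in> hom C a b) \<and>
        (\<forall>f \<in> hom C a b. \<forall>g \<in> hom C a b. \<forall>h \<in> hom C a b.
           plus C (plus C f g) h = plus C f (plus C g h)) \<and>
        (\<forall>f \<in> hom C a b. \<forall>g \<in> hom C a b. plus C f g = plus C g f) \<and>
        (\<forall>f \<in> hom C a b. plus C f (zero C a b) = f) \<and>
        (\<forall>f \<in> hom C a b. plus C f (neg C f) = zero C a b)) \<and>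
     (\<forall>a \<in> Ob C. \<forall>b \<in> Ob C. \<forall>c \<in> Ob C.
        \<forall>f \<in> hom C a b. \<forall>f' \<in> hom C a b. \<forall>g \<in> hom C b c. \<forall>g' \<in> hom C b c.
        comp C g (plus C f f') = plus C (comp C g f) (comp C g f') \<and>
        comp C (plus C g g') f = plus C (comp C g f) (comp C g' f))"

definition is_zero_object :: "('o, 'm, 'x) addcat_scheme \<Rightarrow> 'o \<Rightarrow> bool" where
  "is_zero_object C z \<longleftrightarrow> z \<in> Ob C \<and> ident C z = zero C z z"

definition is_biproduct ::
  "('o, 'm, 'x) addcat_scheme \<Rightarrow> 'o \<Rightarrow> 'o \<Rightarrow> 'o \<Rightarrow> 'm \<Rightarrow> 'm \<Rightarrow> 'm \<Rightarrow> 'm \<Rightarrow> bool" where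
  "is_biproduct C a b s i1 i2 p1 p2 \<longleftrightarrow> s \<in> Ob C \<and>
     i1 \<in> hom C a s \<and> i2 \<in> hom C b s \<and> p1 \<in> hom C s a \<and> p2 \<in> hom C s b \<and>
     comp C p1 i1 = ident C a \<and> comp C p2 i2 = ident C b \<and>
     comp C p1 i2 = zero C b a \<and> comp C p2 i1 = zero C a b \<and>
     plus C (comp C i1 p1) (comp C i2 p2) = ident C s"

definition additive :: "('o, 'm, 'x) addcat_scheme \<Rightarrow> bool" where
  "additive C \<longleftrightarrow> preadditive C \<and> (\<exists>z. is_zero_object C z) \<and>
     (\<forall>a \<in> Ob C. \<forall>b \<in> Ob C. \<exists>s i1 i2 p1 p2. is_biproduct C a b s i1 i2 p1 p2)"

definition is_iso :: "('o, 'm, 'x) addcat_scheme \<Rightarrow> 'm \<Rightarrow> bool" where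
  "is_iso C f \<longleftrightarrow> f \<in> Mor C \<and> (\<exists>g \<in> hom C (cod C f) (dom C f).
     comp C g f = ident C (dom C f) \<and> comp C f g = ident C (cod C f))"

definition is_kernel :: "('o, 'm, 'x) addcat_scheme \<Rightarrow> 'm \<Rightarrow> 'm \<Rightarrow> bool" where
  "is_kernel C k f \<longleftrightarrow> k \<in> Mor C \<and> f \<in> Mor C \<and> cod C k = dom C f \<and>
     comp C f k = zero C (dom C k) (cod C f) \<and>
     (\<forall>g \<in> Mor C. cod C g = dom C f \<and> comp C f g = zero C (dom C g) (cod C f) \<longrightarrow>
        (\<exists>!h. h \<in> hom C (dom C g) (dom C k) \<and> comp C k h = g))"

definition is_cokernel :: "('o, 'm, 'x) addcat_scheme \<Rightarrow> 'm \<Rightarrow> 'm \<Rightarrow> bool" where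
  "is_cokernel C c f \<longleftrightarrow> c \<in> Mor C \<and> f \<in> Mor C \<and> dom C c = cod C f \<and>
     comp C c f = zero C (dom C f) (cod C c) \<and>
     (\<forall>g \<in> Mor C. dom C g = cod C f \<and> comp C g f = zero C (dom C f) (cod C g) \<longrightarrow>
        (\<exists>!h. h \<in> hom C (cod C c) (cod C g) \<and> comp C h c = g))"

definition kernel_cokernel_pair :: "('o, 'm, 'x) addcat_scheme \<Rightarrow> 'm \<Rightarrow> 'm \<Rightarrow> bool" where
  "kernel_cokernel_pair C i d \<longleftrightarrow> is_kernel C i d \<and> is_cokernel C d i"

text \<open>Pushout square: f : A \<rightarrow> B, g : A \<rightarrow> C', with g' : B \<rightarrow> P and f' : C' \<rightarrow> P
(f' is the pushout of f along g), g' f = f' g, universal.\<close>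
definition is_pushout ::
  "('o, 'm, 'x) addcat_scheme \<Rightarrow> 'm \<Rightarrow> 'm \<Rightarrow> 'o \<Rightarrow> 'm \<Rightarrow> 'm \<Rightarrow> bool" where
  "is_pushout C f g P f' g' \<longleftrightarrow> f \<in> Mor C \<and> g \<in> Mor C \<and> dom C f = dom C g \<and> P \<in> Ob C \<and>
     g' \<in> hom C (cod C f) P \<and> f' \<in> hom C (cod C g) P \<and> comp C g' f = comp C f' g \<and>
     (\<forall>T \<in> Ob C. \<forall>x \<in> hom C (cod C f) T. \<forall>y \<in> hom C (cod C g) T.
        comp C x f = comp C y g \<longrightarrow>
        (\<exists>!h. h \<in> hom C P T \<and> comp C h g' = x \<and> comp C h f' = y))"

text \<open>Pullback square: f : B \<rightarrow> A, g : C' \<rightarrow> A, with g' : P \<rightarrow> B and f' : P \<rightarrow> C'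
(f' is the pullback of f along g), f g' = g f', universal.\<close>
definition is_pullback ::
  "('o, 'm, 'x) addcat_scheme \<Rightarrow> 'm \<Rightarrow> 'm \<Rightarrow> 'o \<Rightarrow> 'm \<Rightarrow> 'm \<Rightarrow> bool" where
  "is_pullback C f g P f' g' \<longleftrightarrow> f \<in> Mor C \<and> g \<in> Mor C \<and> cod C f = cod C g \<and> P \<in> Ob C \<and>
     g' \<in> hom C P (dom C f) \<and> f' \<in> hom C P (dom C g) \<and> comp C f g' = comp C g f' \<and>
     (\<forall>T \<in> Ob C. \<forall>x \<in> hom C T (dom C f). \<forall>y \<in> hom C T (dom C g).
        comp C f x = comp C g y \<longrightarrow>
        (\<exists>!h. h \<in> hom C T P \<and> comp C g' h = x \<and> comp C f' h = y))"

definition inflation :: "('o, 'm, 'x) addcat_scheme \<Rightarrow> ('m \<times> 'm) set \<Rightarrow> 'm \<Rightarrow> bool" where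
  "inflation C E i \<longleftrightarrow> (\<exists>d. (i, d) \<in> E)"

definition deflation :: "('o, 'm, 'x) addcat_scheme \<Rightarrow> ('m \<times> 'm) set \<Rightarrow> 'm \<Rightarrow> bool" where
  "deflation C E d \<longleftrightarrow> (\<exists>i. (i, d) \<in> E)"

text \<open>Exact category in the sense of Quillen--Keller (axioms as in Buehler's survey):
E is a class of kernel-cokernel pairs, closed under isomorphisms, satisfying
[E0],[E0op],[E1],[E1op],[E2],[E2op].\<close>
definition exact_category :: "('o, 'm, 'x) addcat_scheme \<Rightarrow> ('m \<times> 'm) set \<Rightarrow> bool" where
  "exact_category C E \<longleftrightarrow> additive C \<and>
     (\<forall>(i, d) \<in> E. kernel_cokernel_pair C i d) \<and>
     (\<forall>i d i' d' a b c. (i, d) \<in> E \<and> kernel_cokernel_pair C i' d' \<and>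
        is_iso C a \<and> is_iso C b \<and> is_iso C c \<and>
        a \<in> hom C (dom C i) (dom C i') \<and> b \<in> hom C (cod C i) (cod C i') \<and>
        c \<in> hom C (cod C d) (cod C d') \<and>
        comp C i' a = comp C b i \<and> comp C d' b = comp C c d \<longrightarrow> (i', d') \<in> E) \<and>
     (\<forall>a \<in> Ob C. inflation C E (ident C a)) \<and>
     (\<forall>a \<in> Ob C. deflation C E (ident C a)) \<and>
     (\<forall>i j. inflation C E i \<and> inflation C E j \<and> cod C i = dom C j \<longrightarrow>
        inflation C E (comp C j i)) \<and>
     (\<forall>d e. deflation C E d \<and> deflation C E e \<and> cod C d = dom C e \<longrightarrow>
        deflation C E (comp C e d)) \<and>
     (\<forall>i f. inflation C E i \<and> f \<in> Mor C \<and> dom C f = dom C i \<longrightarrow>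
        (\<exists>P i' f'. is_pushout C i f P i' f' \<and> inflation C E i')) \<and>
     (\<forall>d f. deflation C E d \<and> f \<in> Mor C \<and> cod C f = cod C d \<longrightarrow>
        (\<exists>P d' f'. is_pullback C d f P d' f' \<and> deflation C E d'))"

definition is_coproduct ::
  "('o, 'm, 'x) addcat_scheme \<Rightarrow> 'i set \<Rightarrow> ('i \<Rightarrow> 'o) \<Rightarrow> 'o \<Rightarrow> ('i \<Rightarrow> 'm) \<Rightarrow> bool" where
  "is_coproduct C I X S u \<longleftrightarrow> S \<in> Ob C \<and> (\<forall>i \<in> I. u i \<in> hom C (X i) S) \<and>
     (\<forall>T \<in> Ob C. \<forall>f. (\<forall>i \<in> I. f i \<in> hom C (X i) T) \<longrightarrow>
        (\<exists>!h. h \<in> hom C S T \<and> (\<forall>i \<in> I. comp C h (u i) = f i)))"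

definition is_coproduct_mor ::
  "('o, 'm, 'x) addcat_scheme \<Rightarrow> 'i set \<Rightarrow> 'o \<Rightarrow> ('i \<Rightarrow> 'm) \<Rightarrow> 'o \<Rightarrow> ('i \<Rightarrow> 'm)
     \<Rightarrow> ('i \<Rightarrow> 'm) \<Rightarrow> 'm \<Rightarrow> bool" where
  "is_coproduct_mor C I S u S' u' f h \<longleftrightarrow> h \<in> hom C S S' \<and>
     (\<forall>i \<in> I. comp C h (u i) = comp C (u' i) (f i))"

text \<open>Exact coproducts, for families indexed by subsets of the type 'i: all such
coproducts exist, and the coproduct of conflations is a conflation.\<close>
definition exact_coproducts ::
  "('o, 'm, 'x) addcat_scheme \<Rightarrow> ('m \<times> 'm) set \<Rightarrow> 'i itself \<Rightarrow> bool" where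
  "exact_coproducts C E (_ :: 'i itself) \<longleftrightarrow>
     (\<forall>(I :: 'i set) X. (\<forall>i \<in> I. X i \<in> Ob C) \<longrightarrow> (\<exists>S u. is_coproduct C I X S u)) \<and>
     (\<forall>(I :: 'i set) X Y Z m e SX uX SY uY SZ uZ mm ee.
        (\<forall>i \<in> I. (m i, e i) \<in> E \<and> m i \<in> hom C (X i) (Y i) \<and> e i \<in> hom C (Y i) (Z i)) \<and>
        is_coproduct C I X SX uX \<and> is_coproduct C I Y SY uY \<and> is_coproduct C I Z SZ uZ \<and>
        is_coproduct_mor C I SX uX SY uY m mm \<and> is_coproduct_mor C I SY uY SZ uZ e ee
        \<longrightarrow> (mm, ee) \<in> E)"

definition is_wide_pushout ::
  "('o, 'm, 'x) addcat_scheme \<Rightarrow> 'i set \<Rightarrow> 'o \<Rightarrow> ('i \<Rightarrow> 'o) \<Rightarrow> ('i \<Rightarrow> 'm)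
     \<Rightarrow> 'o \<Rightarrow> ('i \<Rightarrow> 'm) \<Rightarrow> 'm \<Rightarrow> bool" where
  "is_wide_pushout C I B X m P c mp \<longleftrightarrow> P \<in> Ob C \<and> mp \<in> hom C B P \<and>
     (\<forall>i \<in> I. c i \<in> hom C (X i) P \<and> comp C (c i) (m i) = mp) \<and>
     (\<forall>T \<in> Ob C. \<forall>t \<in> hom C B T. \<forall>f. (\<forall>i \<in> I. f i \<in> hom C (X i) T \<and> comp C (f i) (m i) = t)
        \<longrightarrow> (\<exists>!h. h \<in> hom C P T \<and> comp C h mp = t \<and> (\<forall>i \<in> I. comp C h (c i) = f i)))"

end

theory Submission
  imports Defs
begin

(* A morphism out of the coproduct of the C^i is a family of morphisms out of the C^i, and a
   square x o (coprod_i m^i) = y o s commutes exactly when x o u_i o m^i = y for every i.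
   Commutative squares under (coprod_i m^i, s) are therefore the same as cocones under the
   family (m^i), so the pushout of coprod_i m^i along s is the pushout of the family.
   By exactness of coproducts coprod_i m^i is an inflation, hence so is its pushout m.
   Pushouts preserve cokernels, so the map from the pushout to coprod_i A^i induced by
   coprod_i e^i and 0 is a cokernel of m; as it is isomorphic to the deflation paired with m
   and conflations are closed under isomorphism, it completes m to a conflation. *)

lemma hom_Ob:
  assumes "category C" "f \<in> hom C a b"
  shows "a \<in> Ob C" "b \<in> Ob C"
  using assms unfolding category_def hom_def by auto

lemma comp_in_hom:
  assumes "category C" "f \<in> hom C a b" "g \<in> hom C b c"
  shows "comp C g f \<in> hom C a c"
  using assms hom_Ob[OF assms(1,2)] hom_Ob[OF assms(1,3)] unfolding category_def by blast

lemma comp_assoc: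
  assumes "category C" "f \<in> hom C a b" "g \<in> hom C b c" "h \<in> hom C c d"
  shows "comp C h (comp C g f) = comp C (comp C h g) f"
  using assms hom_Ob[OF assms(1,2)] hom_Ob[OF assms(1,4)] unfolding category_def by blast

lemma ident_in_hom: "category C \<Longrightarrow> a \<in> Ob C \<Longrightarrow> ident C a \<in> hom C a a"
  unfolding category_def by blast

lemma comp_ident_right: "category C \<Longrightarrow> f \<in> hom C a b \<Longrightarrow> comp C f (ident C a) = f"
  unfolding category_def hom_def by blast

lemma comp_ident_left: "category C \<Longrightarrow> f \<in> hom C a b \<Longrightarrow> comp C (ident C b) f = f"
  unfolding category_def hom_def by blast

lemma ident_is_iso:
  assumes "category C" "a \<in> Ob C"
  shows "is_iso C (ident C a)"
proof -
  have id: "ident C a \<in> hom C a a" using ident_in_hom[OF assms] .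
  moreover have "comp C (ident C a) (ident C a) = ident C a"
    using comp_ident_left[OF assms(1) id] .
  ultimately show ?thesis unfolding is_iso_def hom_def by auto
qed

lemma preadditive_category: "preadditive C \<Longrightarrow> category C"
  unfolding preadditive_def by blast

lemma zero_in_hom: "preadditive C \<Longrightarrow> a \<in> Ob C \<Longrightarrow> b \<in> Ob C \<Longrightarrow> zero C a b \<in> hom C a b"
  unfolding preadditive_def by blast

lemma idempotent_plus_eq_zero:
  assumes "preadditive C" "a \<in> Ob C" "b \<in> Ob C" "x \<in> hom C a b" "plus C x x = x"
  shows "x = zero C a b"
proof -
  have "neg C x \<in> hom C a b" "plus C x (neg C x) = zero C a b" "plus C x (zero C a b) = x"
    "plus C (plus C x x) (neg C x) = plus C x (plus C x (neg C x))"
    using assms unfolding preadditive_def by blast+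
  then show ?thesis using assms(5) by simp
qed

lemma comp_zero_right:
  assumes pre: "preadditive C" and a: "a \<in> Ob C" and g: "g \<in> hom C b c"
  shows "comp C g (zero C a b) = zero C a c"
proof -
  have cat: "category C" using pre by (rule preadditive_category)
  have b: "b \<in> Ob C" and c: "c \<in> Ob C" using hom_Ob[OF cat g] by auto
  have z: "zero C a b \<in> hom C a b" using zero_in_hom[OF pre a b] .
  have "plus C (zero C a b) (zero C a b) = zero C a b"
    using pre a b z unfolding preadditive_def by blast
  moreover have "comp C g (plus C (zero C a b) (zero C a b))
      = plus C (comp C g (zero C a b)) (comp C g (zero C a b))"
    using pre a b c z g unfolding preadditive_def by blast
  ultimately show ?thesis
    using idempotent_plus_eq_zero[OF pre a c comp_in_hom[OF cat z g]] by simp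
qed

lemma comp_zero_left:
  assumes pre: "preadditive C" and f: "f \<in> hom C a b" and c: "c \<in> Ob C"
  shows "comp C (zero C b c) f = zero C a c"
proof -
  have cat: "category C" using pre by (rule preadditive_category)
  have a: "a \<in> Ob C" and b: "b \<in> Ob C" using hom_Ob[OF cat f] by auto
  have z: "zero C b c \<in> hom C b c" using zero_in_hom[OF pre b c] .
  have "plus C (zero C b c) (zero C b c) = zero C b c"
    using pre b c z unfolding preadditive_def by blast
  moreover have "comp C (plus C (zero C b c) (zero C b c)) f
      = plus C (comp C (zero C b c) f) (comp C (zero C b c) f)"
    using pre a b c z f unfolding preadditive_def by blast
  ultimately show ?thesis
    using idempotent_plus_eq_zero[OF pre a c comp_in_hom[OF cat f z]] by simp
qed

lemma is_cokernelI:
  assumes cat: "category C" and f: "f \<in> hom C a b" and c: "c \<in> hom C b z"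
    and zero: "comp C c f = zero C a z"
    and factor: "\<And>T g. T \<in> Ob C \<Longrightarrow> g \<in> hom C b T \<Longrightarrow> comp C g f = zero C a T \<Longrightarrow>
        \<exists>h \<in> hom C z T. comp C h c = g"
    and epi: "\<And>T h h'. h \<in> hom C z T \<Longrightarrow> h' \<in> hom C z T \<Longrightarrow> comp C h c = comp C h' c \<Longrightarrow> h = h'"
  shows "is_cokernel C c f"
  unfolding is_cokernel_def
proof (intro conjI ballI impI)
  fix g assume g: "g \<in> Mor C" "dom C g = cod C f \<and> comp C g f = zero C (dom C f) (cod C g)"
  then have g': "g \<in> hom C b (cod C g)" "comp C g f = zero C a (cod C g)"
    using f by (auto simp: hom_def)
  obtain h where h: "h \<in> hom C z (cod C g)" "comp C h c = g"
    using factor[OF hom_Ob(2)[OF cat g'(1)] g'] by blast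
  moreover have "cod C c = z" using c by (simp add: hom_def)
  ultimately show "\<exists>!h. h \<in> hom C (cod C c) (cod C g) \<and> comp C h c = g"
    using epi by metis
next
  show "c \<in> Mor C" "f \<in> Mor C" "dom C c = cod C f"
    "comp C c f = zero C (dom C f) (cod C c)"
    using f c zero by (simp_all add: hom_def)
qed

lemma cokernel_factors:
  assumes "is_cokernel C c f" "g \<in> hom C (cod C f) T" "comp C g f = zero C (dom C f) T"
  obtains h where "h \<in> hom C (cod C c) T" "comp C h c = g"
  using assms unfolding is_cokernel_def hom_def by blast

lemma cokernel_hom_eqI:
  assumes pre: "preadditive C" and ck: "is_cokernel C c f"
    and h: "h \<in> hom C (cod C c) T" "h' \<in> hom C (cod C c) T" and eq: "comp C h c = comp C h' c"
  shows "h = h'"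
proof -
  have cat: "category C" using pre by (rule preadditive_category)
  have c: "c \<in> hom C (cod C f) (cod C c)" and f: "f \<in> hom C (dom C f) (cod C f)"
    and cf: "comp C c f = zero C (dom C f) (cod C c)"
    using ck unfolding is_cokernel_def hom_def by auto
  have hc: "comp C h c \<in> hom C (cod C f) T" using comp_in_hom[OF cat c h(1)] .
  have "comp C (comp C h c) f = comp C h (zero C (dom C f) (cod C c))"
    using comp_assoc[OF cat f c h(1)] cf by simp
  also have "\<dots> = zero C (dom C f) T"
    using comp_zero_right[OF pre hom_Ob(1)[OF cat f] h(1)] .
  finally have "comp C (comp C h c) f = zero C (dom C f) T" .
  moreover have "comp C h c \<in> Mor C" "dom C (comp C h c) = cod C f" "cod C (comp C h c) = T"
    using hc by (simp_all add: hom_def)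
  ultimately have "\<exists>!k. k \<in> hom C (cod C c) T \<and> comp C k c = comp C h c"
    using ck unfolding is_cokernel_def by metis
  then show ?thesis using h eq by metis
qed

lemma pushout_universal:
  assumes "is_pushout C f g P f' g'" "T \<in> Ob C" "x \<in> hom C (cod C f) T" "y \<in> hom C (cod C g) T"
    "comp C x f = comp C y g"
  shows "\<exists>!h. h \<in> hom C P T \<and> comp C h g' = x \<and> comp C h f' = y"
  using assms by (simp add: is_pushout_def)

lemma pushout_hom_eqI:
  assumes cat: "category C" and po: "is_pushout C f g P f' g'"
    and h: "h \<in> hom C P T" "h' \<in> hom C P T"
    and eq: "comp C h g' = comp C h' g'" "comp C h f' = comp C h' f'"
  shows "h = h'"
proof -
  have f: "f \<in> hom C (dom C f) (cod C f)" and g: "g \<in> hom C (dom C f) (cod C g)"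
    and g': "g' \<in> hom C (cod C f) P" and f': "f' \<in> hom C (cod C g) P"
    and sq: "comp C g' f = comp C f' g"
    using po unfolding is_pushout_def hom_def by auto
  have x: "comp C h g' \<in> hom C (cod C f) T" and y: "comp C h f' \<in> hom C (cod C g) T"
    using comp_in_hom[OF cat g' h(1)] comp_in_hom[OF cat f' h(1)] .
  have "comp C (comp C h g') f = comp C (comp C h f') g"
    using comp_assoc[OF cat f g' h(1)] comp_assoc[OF cat g f' h(1)] sq by simp
  then have "\<exists>!k. k \<in> hom C P T \<and> comp C k g' = comp C h g' \<and> comp C k f' = comp C h f'"
    using pushout_universal[OF po hom_Ob(2)[OF cat h(1)] x y] by blast
  then show ?thesis using h eq by metis
qed

lemma coproduct_Ob: "is_coproduct C I X S u \<Longrightarrow> S \<in> Ob C"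
  unfolding is_coproduct_def by blast

lemma coprojection_in_hom: "is_coproduct C I X S u \<Longrightarrow> i \<in> I \<Longrightarrow> u i \<in> hom C (X i) S"
  unfolding is_coproduct_def by blast

lemma coproduct_universal:
  assumes "is_coproduct C I X S u" "T \<in> Ob C" "\<forall>i \<in> I. f i \<in> hom C (X i) T"
  shows "\<exists>!h. h \<in> hom C S T \<and> (\<forall>i \<in> I. comp C h (u i) = f i)"
  using assms by (simp add: is_coproduct_def)

lemma coproduct_copairing:
  assumes "is_coproduct C I X S u" "T \<in> Ob C" "\<forall>i \<in> I. f i \<in> hom C (X i) T"
  obtains h where "h \<in> hom C S T" "\<forall>i \<in> I. comp C h (u i) = f i"
  using coproduct_universal[OF assms] by blast

lemma coproduct_hom_eq_iff:
  assumes cat: "category C" and cp: "is_coproduct C I X S u"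
    and h: "h \<in> hom C S T" "h' \<in> hom C S T"
  shows "h = h' \<longleftrightarrow> (\<forall>i \<in> I. comp C h (u i) = comp C h' (u i))"
proof
  assume eq: "\<forall>i \<in> I. comp C h (u i) = comp C h' (u i)"
  have "\<forall>i \<in> I. comp C h (u i) \<in> hom C (X i) T"
    using comp_in_hom[OF cat coprojection_in_hom[OF cp] h(1)] by blast
  then have "\<exists>!k. k \<in> hom C S T \<and> (\<forall>i \<in> I. comp C k (u i) = comp C h (u i))"
    by (rule coproduct_universal[OF cp hom_Ob(2)[OF cat h(1)]])
  then show "h = h'" using h eq by metis
qed simp

lemma coproduct_comp_eq_iff:
  assumes cat: "category C" and cp: "is_coproduct C I X S u"
    and q: "q \<in> hom C S P" and h: "h \<in> hom C P T" and x: "x \<in> hom C S T"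
  shows "comp C h q = x \<longleftrightarrow> (\<forall>i \<in> I. comp C h (comp C q (u i)) = comp C x (u i))"
  using coproduct_hom_eq_iff[OF cat cp comp_in_hom[OF cat q h] x]
    comp_assoc[OF cat coprojection_in_hom[OF cp] q h] by simp

lemma coproduct_mor_exists:
  assumes cat: "category C" and cX: "is_coproduct C I X SX uX" and cY: "is_coproduct C I Y SY uY"
    and f: "\<forall>i \<in> I. f i \<in> hom C (X i) (Y i)"
  obtains h where "is_coproduct_mor C I SX uX SY uY f h"
proof -
  have "\<forall>i \<in> I. comp C (uY i) (f i) \<in> hom C (X i) SY"
    using f comp_in_hom[OF cat _ coprojection_in_hom[OF cY]] by blast
  then obtain h where "h \<in> hom C SX SY" "\<forall>i \<in> I. comp C h (uX i) = comp C (uY i) (f i)"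
    by (rule coproduct_copairing[OF cX coproduct_Ob[OF cY]])
  then show ?thesis using that unfolding is_coproduct_mor_def by blast
qed

locale coproduct_sum_square =
  fixes C :: "('o, 'm, 'x) addcat_scheme" and I :: "'i set"
    and B :: 'o and Cc :: "'i \<Rightarrow> 'o" and m :: "'i \<Rightarrow> 'm"
    and SB :: 'o and uB :: "'i \<Rightarrow> 'm" and SC :: 'o and uC :: "'i \<Rightarrow> 'm" and mu s :: 'm
  assumes category: "category C"
    and m_in_hom: "\<forall>i \<in> I. m i \<in> hom C B (Cc i)"
    and coproduct_B: "is_coproduct C I (\<lambda>_. B) SB uB"
    and coproduct_C: "is_coproduct C I Cc SC uC"
    and coproduct_mor: "is_coproduct_mor C I SB uB SC uC m mu"
    and sum_in_hom: "s \<in> hom C SB B"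
    and sum_coprojection: "\<forall>i \<in> I. comp C s (uB i) = ident C B"
begin

lemma mu_in_hom: "mu \<in> hom C SB SC"
  using coproduct_mor unfolding is_coproduct_mor_def by blast

lemma square_commutes_iff_cocone:
  assumes x: "x \<in> hom C SC T" and y: "y \<in> hom C B T"
  shows "comp C x mu = comp C y s \<longleftrightarrow> (\<forall>i \<in> I. comp C (comp C x (uC i)) (m i) = y)"
proof -
  have "comp C (comp C x mu) (uB i) = comp C (comp C x (uC i)) (m i)" if i: "i \<in> I" for i
  proof -
    have uB: "uB i \<in> hom C B SB" and uC: "uC i \<in> hom C (Cc i) SC" and mi: "m i \<in> hom C B (Cc i)"
      using coprojection_in_hom[OF coproduct_B i] coprojection_in_hom[OF coproduct_C i] m_in_hom i
      by auto
    have "comp C (comp C x mu) (uB i) = comp C x (comp C mu (uB i))"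
      using comp_assoc[OF category uB mu_in_hom x] by simp
    also have "\<dots> = comp C x (comp C (uC i) (m i))"
      using coproduct_mor i unfolding is_coproduct_mor_def by simp
    also have "\<dots> = comp C (comp C x (uC i)) (m i)"
      using comp_assoc[OF category mi uC x] .
    finally show ?thesis .
  qed
  moreover have "comp C (comp C y s) (uB i) = y" if i: "i \<in> I" for i
    using comp_assoc[OF category coprojection_in_hom[OF coproduct_B i] sum_in_hom y]
      sum_coprojection comp_ident_right[OF category y] i by simp
  ultimately show ?thesis
    using coproduct_hom_eq_iff[OF category coproduct_B
        comp_in_hom[OF category mu_in_hom x] comp_in_hom[OF category sum_in_hom y]]
    by simp
qed

lemma wide_pushout_of_pushout:
  assumes po: "is_pushout C mu s P mp q"
  shows "is_wide_pushout C I B Cc m P (\<lambda>i. comp C q (uC i)) mp"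
proof -
  have P: "P \<in> Ob C" and q: "q \<in> hom C SC P" and mp: "mp \<in> hom C B P"
    and sq: "comp C q mu = comp C mp s"
    using po mu_in_hom sum_in_hom unfolding is_pushout_def hom_def by auto
  show ?thesis unfolding is_wide_pushout_def
  proof (intro conjI ballI allI impI)
    fix i assume "i \<in> I"
    then show "comp C q (uC i) \<in> hom C (Cc i) P" "comp C (comp C q (uC i)) (m i) = mp"
      using comp_in_hom[OF category coprojection_in_hom[OF coproduct_C] q]
        square_commutes_iff_cocone[OF q mp] sq by auto
  next
    fix T t f
    assume T: "T \<in> Ob C" and t: "t \<in> hom C B T"
      and f: "\<forall>i \<in> I. f i \<in> hom C (Cc i) T \<and> comp C (f i) (m i) = t"
    obtain x where x: "x \<in> hom C SC T" "\<forall>i \<in> I. comp C x (uC i) = f i"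
      using coproduct_copairing[OF coproduct_C T] f by blast
    have "comp C x mu = comp C t s"
      using square_commutes_iff_cocone[OF x(1) t] x(2) f by simp
    then have "\<exists>!h. h \<in> hom C P T \<and> comp C h q = x \<and> comp C h mp = t"
      using pushout_universal[OF po T] x(1) t mu_in_hom sum_in_hom by (simp add: hom_def)
    moreover have "\<forall>h \<in> hom C P T. comp C h q = x \<longleftrightarrow> (\<forall>i \<in> I. comp C h (comp C q (uC i)) = f i)"
      using coproduct_comp_eq_iff[OF category coproduct_C q _ x(1)] x(2) by simp
    ultimately show "\<exists>!h. h \<in> hom C P T \<and> comp C h mp = t \<and> (\<forall>i \<in> I. comp C h (comp C q (uC i)) = f i)"
      by metis
  qed (use P mp in auto)
qed

lemma pushout_of_wide_pushout:
  assumes wp: "is_wide_pushout C I B Cc m P c mp"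
    and q: "q \<in> hom C SC P" and qc: "\<forall>i \<in> I. comp C q (uC i) = c i"
  shows "is_pushout C mu s P mp q"
proof -
  have P: "P \<in> Ob C" and mp: "mp \<in> hom C B P"
    and cocone: "\<forall>i \<in> I. comp C (c i) (m i) = mp"
    using wp unfolding is_wide_pushout_def by auto
  have sq: "comp C q mu = comp C mp s"
    using square_commutes_iff_cocone[OF q mp] qc cocone by simp
  show ?thesis unfolding is_pushout_def
  proof (intro conjI ballI allI impI)
    fix T x y
    assume T: "T \<in> Ob C" and x: "x \<in> hom C (cod C mu) T" and y: "y \<in> hom C (cod C s) T"
      and eq: "comp C x mu = comp C y s"
    have x: "x \<in> hom C SC T" and y: "y \<in> hom C B T"
      using x y mu_in_hom sum_in_hom by (auto simp: hom_def)
    have "\<forall>i \<in> I. comp C x (uC i) \<in> hom C (Cc i) T \<and> comp C (comp C x (uC i)) (m i) = y"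
      using comp_in_hom[OF category coprojection_in_hom[OF coproduct_C] x]
        square_commutes_iff_cocone[OF x y] eq by auto
    then have "\<exists>!h. h \<in> hom C P T \<and> comp C h mp = y \<and> (\<forall>i \<in> I. comp C h (c i) = comp C x (uC i))"
      using wp T y unfolding is_wide_pushout_def by simp
    moreover have "\<forall>h \<in> hom C P T. comp C h q = x \<longleftrightarrow> (\<forall>i \<in> I. comp C h (c i) = comp C x (uC i))"
      using coproduct_comp_eq_iff[OF category coproduct_C q _ x] qc by simp
    ultimately show "\<exists>!h. h \<in> hom C P T \<and> comp C h q = x \<and> comp C h mp = y"
      by metis
  qed (use P q mp sq mu_in_hom sum_in_hom in \<open>simp_all add: hom_def\<close>)
qed

end

lemma pushout_induced_is_cokernel:
  assumes pre: "preadditive C" and po: "is_pushout C f g P f' g'" and ck: "is_cokernel C e f"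
    and d: "d \<in> hom C P (cod C e)" "comp C d g' = e" "comp C d f' = zero C (cod C g) (cod C e)"
  shows "is_cokernel C d f'"
proof -
  define a b b' z where "a = dom C f" and "b = cod C f" and "b' = cod C g" and "z = cod C e"
  have cat: "category C" using pre by (rule preadditive_category)
  have f: "f \<in> hom C a b" and g: "g \<in> hom C a b'"
    and g': "g' \<in> hom C b P" and f': "f' \<in> hom C b' P" and sq: "comp C g' f = comp C f' g"
    using po unfolding is_pushout_def hom_def a_def b_def b'_def by auto
  have d: "d \<in> hom C P z" "comp C d g' = e" "comp C d f' = zero C b' z"
    using d unfolding z_def b'_def by auto
  show ?thesis
  proof (rule is_cokernelI[OF cat f' d(1,3)])
    fix T k assume T: "T \<in> Ob C" and k: "k \<in> hom C P T" and kf': "comp C k f' = zero C b' T"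
    have "comp C (comp C k g') f = comp C (comp C k f') g"
      using comp_assoc[OF cat f g' k] comp_assoc[OF cat g f' k] sq by simp
    also have "\<dots> = zero C a T" using kf' comp_zero_left[OF pre g T] by simp
    finally obtain h where h: "h \<in> hom C z T" "comp C h e = comp C k g'"
      using cokernel_factors[OF ck] comp_in_hom[OF cat g' k] unfolding a_def b_def z_def by metis
    have "comp C h d = k"
    proof (rule pushout_hom_eqI[OF cat po comp_in_hom[OF cat d(1) h(1)] k])
      show "comp C (comp C h d) g' = comp C k g'"
        using comp_assoc[OF cat g' d(1) h(1)] d(2) h(2) by simp
      show "comp C (comp C h d) f' = comp C k f'"
        using comp_assoc[OF cat f' d(1) h(1)] d(3) kf' comp_zero_right[OF pre hom_Ob(1)[OF cat f'] h(1)]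
        by simp
    qed
    then show "\<exists>h \<in> hom C z T. comp C h d = k" using h(1) by blast
  next
    fix T h h' assume h: "h \<in> hom C z T" "h' \<in> hom C z T" and eq: "comp C h d = comp C h' d"
    have "comp C h e = comp C h' e"
      using comp_assoc[OF cat g' d(1) h(1)] comp_assoc[OF cat g' d(1) h(2)] d(2) eq by simp
    then show "h = h'" using cokernel_hom_eqI[OF pre ck] h unfolding z_def by blast
  qed
qed

lemma pushout_cokernel:
  assumes pre: "preadditive C" and po: "is_pushout C f g P f' g'" and ck: "is_cokernel C e f"
  obtains d where "d \<in> hom C P (cod C e)" "comp C d g' = e"
    "comp C d f' = zero C (cod C g) (cod C e)" "is_cokernel C d f'"
proof -
  have cat: "category C" using pre by (rule preadditive_category)
  have f: "f \<in> hom C (dom C f) (cod C f)" and g: "g \<in> hom C (dom C f) (cod C g)"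
    using po unfolding is_pushout_def hom_def by auto
  have e: "e \<in> hom C (cod C f) (cod C e)" and ef: "comp C e f = zero C (dom C f) (cod C e)"
    using ck unfolding is_cokernel_def hom_def by auto
  have b': "cod C g \<in> Ob C" and z: "cod C e \<in> Ob C"
    using hom_Ob[OF cat g] hom_Ob[OF cat e] by auto
  have "comp C e f = comp C (zero C (cod C g) (cod C e)) g"
    using ef comp_zero_left[OF pre g z] by simp
  then obtain d where "d \<in> hom C P (cod C e)" "comp C d g' = e"
      "comp C d f' = zero C (cod C g) (cod C e)"
    using pushout_universal[OF po z e zero_in_hom[OF pre b' z]] by blast
  then show ?thesis using that pushout_induced_is_cokernel[OF pre po ck] by blast
qed

lemma cokernel_unique_up_to_iso:
  assumes pre: "preadditive C" and ck: "is_cokernel C d f" and ck': "is_cokernel C d' f"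
  obtains \<phi> where "\<phi> \<in> hom C (cod C d') (cod C d)" "is_iso C \<phi>" "comp C \<phi> d' = d"
proof -
  have cat: "category C" using pre by (rule preadditive_category)
  have d: "d \<in> hom C (cod C f) (cod C d)" "comp C d f = zero C (dom C f) (cod C d)"
    and d': "d' \<in> hom C (cod C f) (cod C d')" "comp C d' f = zero C (dom C f) (cod C d')"
    using ck ck' unfolding is_cokernel_def hom_def by auto
  obtain \<phi> where \<phi>: "\<phi> \<in> hom C (cod C d') (cod C d)" "comp C \<phi> d' = d"
    using cokernel_factors[OF ck' d] by blast
  obtain \<psi> where \<psi>: "\<psi> \<in> hom C (cod C d) (cod C d')" "comp C \<psi> d = d'"
    using cokernel_factors[OF ck d'] by blast
  have "comp C \<psi> \<phi> = ident C (cod C d')"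
    using cokernel_hom_eqI[OF pre ck' comp_in_hom[OF cat \<phi>(1) \<psi>(1)]
        ident_in_hom[OF cat hom_Ob(2)[OF cat d'(1)]]]
      comp_assoc[OF cat d'(1) \<phi>(1) \<psi>(1)] comp_ident_left[OF cat d'(1)] \<phi>(2) \<psi>(2) by simp
  moreover have "comp C \<phi> \<psi> = ident C (cod C d)"
    using cokernel_hom_eqI[OF pre ck comp_in_hom[OF cat \<psi>(1) \<phi>(1)]
        ident_in_hom[OF cat hom_Ob(2)[OF cat d(1)]]]
      comp_assoc[OF cat d(1) \<psi>(1) \<phi>(1)] comp_ident_left[OF cat d(1)] \<phi>(2) \<psi>(2) by simp
  ultimately have "is_iso C \<phi>" using \<phi>(1) \<psi>(1) unfolding is_iso_def hom_def by auto
  then show ?thesis using that \<phi> by blast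
qed

lemma kernel_cokernel_pair_replace_cokernel:
  assumes pre: "preadditive C" and kc: "kernel_cokernel_pair C i d'" and ck: "is_cokernel C d i"
  shows "kernel_cokernel_pair C i d"
proof -
  have cat: "category C" using pre by (rule preadditive_category)
  have d': "d' \<in> hom C (cod C i) (cod C d')" "comp C d' i = zero C (dom C i) (cod C d')"
    using kc unfolding kernel_cokernel_pair_def is_cokernel_def hom_def by auto
  obtain \<psi> where \<psi>: "\<psi> \<in> hom C (cod C d) (cod C d')" "comp C \<psi> d = d'"
    using cokernel_factors[OF ck d'] by blast
  have "is_kernel C i d" unfolding is_kernel_def
  proof (intro conjI ballI impI)
    fix g assume g: "g \<in> Mor C" "cod C g = dom C d \<and> comp C d g = zero C (dom C g) (cod C d)"
    have d: "d \<in> hom C (cod C i) (cod C d)" and gh: "g \<in> hom C (dom C g) (cod C i)"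
      using ck g unfolding is_cokernel_def hom_def by auto
    have "comp C d' g = comp C \<psi> (comp C d g)"
      using comp_assoc[OF cat gh d \<psi>(1)] \<psi>(2) by simp
    also have "\<dots> = zero C (dom C g) (cod C d')"
      using g comp_zero_right[OF pre hom_Ob(1)[OF cat gh] \<psi>(1)] by simp
    finally show "\<exists>!h. h \<in> hom C (dom C g) (dom C i) \<and> comp C i h = g"
      using kc g(1) gh unfolding kernel_cokernel_pair_def is_kernel_def hom_def by simp
  qed (use ck in \<open>simp_all add: is_cokernel_def\<close>)
  then show ?thesis using ck unfolding kernel_cokernel_pair_def by blast
qed

lemma exact_category_preadditive: "exact_category C E \<Longrightarrow> preadditive C"
  unfolding exact_category_def additive_def by blast

lemma exact_category_kernel_cokernel_pair:
  "exact_category C E \<Longrightarrow> (i, d) \<in> E \<Longrightarrow> kernel_cokernel_pair C i d"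
  unfolding exact_category_def by blast

lemma exact_category_iso_closed:
  assumes "exact_category C E" and "(i, d) \<in> E" and "kernel_cokernel_pair C i' d'"
    and "is_iso C a" "is_iso C b" "is_iso C c"
    and "a \<in> hom C (dom C i) (dom C i')" "b \<in> hom C (cod C i) (cod C i')"
    and "c \<in> hom C (cod C d) (cod C d')"
    and "comp C i' a = comp C b i" "comp C d' b = comp C c d"
  shows "(i', d') \<in> E"
  using assms unfolding exact_category_def by metis

lemma exact_category_pushout_inflation:
  assumes "exact_category C E" "inflation C E i" "f \<in> Mor C" "dom C f = dom C i"
  obtains P i' f' where "is_pushout C i f P i' f'" "inflation C E i'"
  using assms unfolding exact_category_def by metis

lemma exact_category_conflation_replace_cokernel:
  assumes ex: "exact_category C E" and conf: "(i, d') \<in> E" and ck: "is_cokernel C d i"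
  shows "(i, d) \<in> E"
proof -
  have pre: "preadditive C" using exact_category_preadditive[OF ex] .
  have cat: "category C" using pre by (rule preadditive_category)
  have kc': "kernel_cokernel_pair C i d'" using exact_category_kernel_cokernel_pair[OF ex conf] .
  then have kc: "kernel_cokernel_pair C i d"
    using kernel_cokernel_pair_replace_cokernel[OF pre _ ck] by blast
  have ck': "is_cokernel C d' i" using kc' unfolding kernel_cokernel_pair_def by blast
  obtain \<phi> where \<phi>: "\<phi> \<in> hom C (cod C d') (cod C d)" "is_iso C \<phi>" "comp C \<phi> d' = d"
    using cokernel_unique_up_to_iso[OF pre ck ck'] by blast
  have i: "i \<in> hom C (dom C i) (cod C i)" and d: "d \<in> hom C (cod C i) (cod C d)"
    using ck unfolding is_cokernel_def hom_def by auto
  have i_ident: "comp C i (ident C (dom C i)) = comp C (ident C (cod C i)) i"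
    using comp_ident_left[OF cat i] comp_ident_right[OF cat i] by simp
  have d_ident: "comp C d (ident C (cod C i)) = comp C \<phi> d'"
    using comp_ident_right[OF cat d] \<phi>(3) by simp
  show ?thesis
    using exact_category_iso_closed[OF ex conf kc ident_is_iso[OF cat] ident_is_iso[OF cat] \<phi>(2)
        ident_in_hom[OF cat] ident_in_hom[OF cat] \<phi>(1) i_ident d_ident]
      hom_Ob[OF cat i] by blast
qed

lemma (in coproduct_sum_square) pushout_of_coproduct_conflation:
  assumes ex: "exact_category C E" and conf: "(mu, eu) \<in> E" and eu: "eu \<in> hom C SC SA"
    and wp: "is_wide_pushout C I B Cc m P c mp" and infl: "inflation C E mp"
    and q: "q \<in> hom C SC P" and qc: "\<forall>i \<in> I. comp C q (uC i) = c i"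
  obtains d where "is_pushout C mu s P mp q" "d \<in> hom C P SA" "(mp, d) \<in> E"
    "comp C d q = eu" "comp C d mp = zero C B SA"
proof -
  have pre: "preadditive C" using exact_category_preadditive[OF ex] .
  have po: "is_pushout C mu s P mp q" using pushout_of_wide_pushout[OF wp q qc] .
  have "is_cokernel C eu mu"
    using exact_category_kernel_cokernel_pair[OF ex conf] unfolding kernel_cokernel_pair_def ..
  moreover have "cod C eu = SA" "cod C s = B" using eu sum_in_hom by (simp_all add: hom_def)
  ultimately obtain d where d: "d \<in> hom C P SA" "comp C d q = eu"
      "comp C d mp = zero C B SA" "is_cokernel C d mp"
    using pushout_cokernel[OF pre po] by metis
  obtain d' where "(mp, d') \<in> E" using infl unfolding inflation_def ..
  then have "(mp, d) \<in> E" using exact_category_conflation_replace_cokernel[OF ex _ d(4)] by blast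
  then show ?thesis using that po d by blast
qed

lemma exact_coproducts_coproduct_exists:
  fixes I :: "'i set"
  assumes "exact_coproducts C E TYPE('i)" "\<forall>i \<in> I. X i \<in> Ob C"
  obtains S u where "is_coproduct C I X S u"
  using assms unfolding exact_coproducts_def by metis

lemma exact_coproducts_conflation:
  fixes I :: "'i set"
  assumes "exact_coproducts C E TYPE('i)"
    and "\<forall>i \<in> I. (m i, e i) \<in> E \<and> m i \<in> hom C (X i) (Y i) \<and> e i \<in> hom C (Y i) (Z i)"
    and "is_coproduct C I X SX uX" "is_coproduct C I Y SY uY" "is_coproduct C I Z SZ uZ"
    and "is_coproduct_mor C I SX uX SY uY m mm" "is_coproduct_mor C I SY uY SZ uZ e ee"
  shows "(mm, ee) \<in> E"
  using assms unfolding exact_coproducts_def by metis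

lemma wide_pushout_of_conflations:
  fixes I :: "'i set"
  assumes ex: "exact_category C E" and xc: "exact_coproducts C E TYPE('i)" and B: "B \<in> Ob C"
    and conf: "\<forall>i \<in> I. (m i, e i) \<in> E \<and> m i \<in> hom C B (Cc i) \<and> e i \<in> hom C (Cc i) (A i)"
  obtains P c mp where "is_wide_pushout C I B Cc m P c mp" "inflation C E mp"
proof -
  have cat: "category C" using preadditive_category[OF exact_category_preadditive[OF ex]] .
  have "\<forall>i \<in> I. Cc i \<in> Ob C \<and> A i \<in> Ob C" using conf hom_Ob[OF cat] by blast
  then obtain SB uB SC uC SA uA where cB: "is_coproduct C I (\<lambda>_. B) SB uB"
    and cC: "is_coproduct C I Cc SC uC" and cA: "is_coproduct C I A SA uA"
    using exact_coproducts_coproduct_exists[OF xc] B by metis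
  obtain mu where mu: "is_coproduct_mor C I SB uB SC uC m mu"
    using coproduct_mor_exists[OF cat cB cC] conf by blast
  obtain eu where eu: "is_coproduct_mor C I SC uC SA uA e eu"
    using coproduct_mor_exists[OF cat cC cA] conf by blast
  obtain s where s: "s \<in> hom C SB B" "\<forall>i \<in> I. comp C s (uB i) = ident C B"
    using coproduct_copairing[OF cB B, of "\<lambda>_. ident C B"] ident_in_hom[OF cat B] by blast
  interpret coproduct_sum_square C I B Cc m SB uB SC uC mu s
    using cat conf cB cC mu s by unfold_locales auto
  have "(mu, eu) \<in> E" using exact_coproducts_conflation[OF xc conf cB cC cA mu eu] .
  then obtain P mp q where "is_pushout C mu s P mp q" "inflation C E mp"
    using exact_category_pushout_inflation[OF ex] mu_in_hom sum_in_hom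
    unfolding inflation_def hom_def by blast
  then show ?thesis using that wide_pushout_of_pushout by blast
qed

theorem lemma5p1:
  fixes C :: "('o, 'm, 'x) addcat_scheme"
    and E :: "('m \<times> 'm) set"
    and I :: "'i set"
    and B :: 'o and Cc A :: "'i \<Rightarrow> 'o" and m e :: "'i \<Rightarrow> 'm"
  assumes "exact_category C E"
    and "exact_coproducts C E TYPE('i)"
    and "B \<in> Ob C"
    and "\<forall>i \<in> I. (m i, e i) \<in> E \<and> m i \<in> hom C B (Cc i) \<and> e i \<in> hom C (Cc i) (A i)"
  shows "\<exists>P c mp. is_wide_pushout C I B Cc m P c mp \<and>
     (\<forall>SB uB SC uC SA uA mu eu s.
        is_coproduct C I (\<lambda>_. B) SB uB \<and> is_coproduct C I Cc SC uC \<and> is_coproduct C I A SA uA \<and>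
        is_coproduct_mor C I SB uB SC uC m mu \<and> is_coproduct_mor C I SC uC SA uA e eu \<and>
        s \<in> hom C SB B \<and> (\<forall>i \<in> I. comp C s (uB i) = ident C B)
        \<longrightarrow> (\<exists>q d. q \<in> hom C SC P \<and> (\<forall>i \<in> I. comp C q (uC i) = c i) \<and>
               is_pushout C mu s P mp q \<and>
               d \<in> hom C P SA \<and> (mp, d) \<in> E \<and> comp C d q = eu \<and> comp C d mp = zero C B SA))"
proof -
  obtain P c mp where wp: "is_wide_pushout C I B Cc m P c mp" and infl: "inflation C E mp"
    using wide_pushout_of_conflations[OF assms] .
  have P: "P \<in> Ob C" and c: "\<forall>i \<in> I. c i \<in> hom C (Cc i) P"
    using wp unfolding is_wide_pushout_def by auto
  show ?thesis
  proof (rule exI[of _ P], rule exI[of _ c], rule exI[of _ mp], intro conjI allI impI)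
    fix SB uB SC uC SA uA mu eu s
    assume H: "is_coproduct C I (\<lambda>_. B) SB uB \<and> is_coproduct C I Cc SC uC \<and>
      is_coproduct C I A SA uA \<and> is_coproduct_mor C I SB uB SC uC m mu \<and>
      is_coproduct_mor C I SC uC SA uA e eu \<and> s \<in> hom C SB B \<and> (\<forall>i \<in> I. comp C s (uB i) = ident C B)"
    interpret coproduct_sum_square C I B Cc m SB uB SC uC mu s
      using preadditive_category[OF exact_category_preadditive[OF assms(1)]] assms(4) H
      by unfold_locales auto
    obtain q where q: "q \<in> hom C SC P" "\<forall>i \<in> I. comp C q (uC i) = c i"
      using coproduct_copairing[OF coproduct_C P c] .
    have "(mu, eu) \<in> E" using exact_coproducts_conflation[OF assms(2,4)] H by blast
    moreover have "eu \<in> hom C SC SA" using H unfolding is_coproduct_mor_def by blast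
    ultimately show "\<exists>q d. q \<in> hom C SC P \<and> (\<forall>i \<in> I. comp C q (uC i) = c i) \<and>
        is_pushout C mu s P mp q \<and> d \<in> hom C P SA \<and> (mp, d) \<in> E \<and>
        comp C d q = eu \<and> comp C d mp = zero C B SA"
      using pushout_of_coproduct_conflation[OF assms(1) _ _ wp infl q] q by metis
  qed (rule wp)
qed

end
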